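(* Let $m\ge3$. If the singleton partition $\mathcal S$ is the unique minimizer of $\Delta$ over partitions of $\mathcal M$ with at least two cells, then $\Delta_T(\mathcal S)<\Delta(\mathcal S)$ for every $T\subset\mathcal M$ with $|T|=m-1$.
   Context: Let $\mathcal M=\{1,\dots,m\}$, and let $X_{\mathcal M}$ be jointly distributed finite-valued random variables, with $X_A=(X_i:i\in A)$. For a partition $\mathcal P$ of $\mathcal M$ with $|\mathcal P|\ge2$, $\Delta(\mathcal P)=\frac1{|\mathcal P|-1}[\sum_{A\in\mathcal P}H(X_A)-H(X_{\mathcal M})]$. $\mathcal S=\{\{1\},\dots,\{m\}\}$ is the singleton partition. For $T\subset\mathcal M$ with $|T|=m-1$, $\Delta_T(\mathcal S)=\frac1{m-2}\big[\sum_{i\in T}H(X_i)-H(X_T)\big]$. *)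

theory Defs
  imports "HOL-Probability.Probability" "HOL-Library.Disjoint_Sets"
begin

definition ent :: "'a pmf \<Rightarrow> ('a \<Rightarrow> 'c) \<Rightarrow> real" where
  "ent P f = (\<Sum>v \<in> f ` set_pmf P.
      - pmf (map_pmf f P) v * log 2 (pmf (map_pmf f P) v))"

definition H :: "'a pmf \<Rightarrow> (nat \<Rightarrow> 'a \<Rightarrow> 'b) \<Rightarrow> nat set \<Rightarrow> real" where
  "H P X A = ent P (\<lambda>\<omega>. restrict (\<lambda>i. X i \<omega>) A)"

definition Delta :: "'a pmf \<Rightarrow> (nat \<Rightarrow> 'a \<Rightarrow> 'b) \<Rightarrow> nat set \<Rightarrow> nat set set \<Rightarrow> real" where
  "Delta P X M \<P> = ((\<Sum>A\<in>\<P>. H P X A) - H P X M) / (real (card \<P>) - 1)"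

definition singletons :: "nat set \<Rightarrow> nat set set" where
  "singletons M = (\<lambda>i. {i}) ` M"

definition DeltaT :: "'a pmf \<Rightarrow> (nat \<Rightarrow> 'a \<Rightarrow> 'b) \<Rightarrow> nat \<Rightarrow> nat set \<Rightarrow> real" where
  "DeltaT P X m T = ((\<Sum>i\<in>T. H P X {i}) - H P X T) / (real m - 2)"

end

theory Submission
  imports Defs
begin

text \<open>Removing one index j from the singleton partition leaves T = M - {j}; the
two-cell partition {T, {j}} has Delta equal to H(X_T) + H(X_j) - H(X_M), and
comparing it with Delta of the singleton partition is, after clearing
denominators, exactly the inequality DeltaT < Delta.\<close>

lemma diff_divide_less_divide_add_one_iff:
  fixes a b x :: real
  assumes "x > 0"
  shows "(a - b) / x < a / (x + 1) \<longleftrightarrow> a / (x + 1) < b"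
  using assms by (simp add: field_simps)

lemma card_singletons:
  "card (singletons M) = card M"
  by (simp add: singletons_def card_image)

lemma sum_singletons:
  "(\<Sum>A\<in>singletons M. f A) = (\<Sum>i\<in>M. f {i})"
  by (simp add: singletons_def sum.reindex)

lemma subset_card_diff_one_obtains_insert:
  assumes "finite M" "T \<subseteq> M" "card T = card M - 1" "M \<noteq> {}"
  obtains j where "j \<notin> T" "M = insert j T"
proof -
  have "card M > 0" using assms(1,4) by (simp add: card_gt_0_iff)
  then have "card (M - T) = 1"
    using assms(1-3) by (simp add: card_Diff_subset finite_subset)
  then obtain j where "M - T = {j}"
    by (auto simp: card_Suc_eq)
  then show thesis
    using that assms(2) by blast
qed

lemma partition_on_insert_pair:
  assumes "T \<noteq> {}" "j \<notin> T"
  shows "partition_on (insert j T) {T, {j}}"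
  using assms unfolding partition_on_def disjoint_def by auto

lemma Delta_pair:
  assumes "j \<notin> T"
  shows "Delta P X M {T, {j}} = H P X T + H P X {j} - H P X M"
proof -
  have "T \<noteq> {j}" using assms by auto
  then show ?thesis by (simp add: Delta_def)
qed

lemma Delta_singletons_insert:
  assumes "finite T" "j \<notin> T"
  shows "Delta P X (insert j T) (singletons (insert j T))
    = ((\<Sum>i\<in>T. H P X {i}) + H P X {j} - H P X (insert j T)) / real (card T)"
  using assms by (simp add: Delta_def sum_singletons card_singletons)

theorem lemma8:
  fixes P :: "'a pmf" and X :: "nat \<Rightarrow> 'a \<Rightarrow> 'b" and m :: nat
  assumes "m \<ge> 3"
    and "\<forall>i\<in>{1..m}. finite (X i ` set_pmf P)"
    and "\<forall>\<P>. partition_on {1..m} \<P> \<and> card \<P> \<ge> 2 \<and> \<P> \<noteq> singletons {1..m}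
           \<longrightarrow> Delta P X {1..m} (singletons {1..m}) < Delta P X {1..m} \<P>"
  shows "\<forall>T. T \<subseteq> {1..m} \<and> card T = m - 1
           \<longrightarrow> DeltaT P X m T < Delta P X {1..m} (singletons {1..m})"
proof (intro allI impI)
  fix T assume T: "T \<subseteq> {1..m} \<and> card T = m - 1"
  have "finite T" using T finite_subset by blast
  obtain j where j: "j \<notin> T" and M: "{1..m} = insert j T"
    using subset_card_diff_one_obtains_insert[of "{1..m}" T] T assms(1) by auto
  have "card T \<ge> 2" using T assms(1) by simp
  then have "T \<notin> singletons {1..m}" and "T \<noteq> {}"
    by (auto simp: singletons_def)
  moreover have "T \<noteq> {j}" using j by auto
  ultimately have "partition_on {1..m} {T, {j}}" "card {T, {j}} = 2"
      "{T, {j}} \<noteq> singletons {1..m}"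
    using partition_on_insert_pair[OF _ j] M by auto
  then have "Delta P X {1..m} (singletons {1..m}) < Delta P X {1..m} {T, {j}}"
    using assms(3) by auto
  moreover have card_T: "real (card T) = (real m - 2) + 1" and "real m - 2 > 0"
    using T assms(1) by auto
  moreover define a where "a = (\<Sum>i\<in>T. H P X {i}) + H P X {j} - H P X {1..m}"
  moreover define b where "b = H P X T + H P X {j} - H P X {1..m}"
  ultimately have "a / ((real m - 2) + 1) < b"
    unfolding M Delta_singletons_insert[OF \<open>finite T\<close> j] Delta_pair[OF j] by simp
  then have "(a - b) / (real m - 2) < a / ((real m - 2) + 1)"
    using diff_divide_less_divide_add_one_iff \<open>real m - 2 > 0\<close> by blast
  then show "DeltaT P X m T < Delta P X {1..m} (singletons {1..m})"
    unfolding DeltaT_def a_def b_def M Delta_singletons_insert[OF \<open>finite T\<close> j] card_T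
    by simp
qed

end
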